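(* For every $d\ge1$, $$\frac{\sqrt2^{\,d}}{(d+1)!\,d}\le H_{1,d}\le\frac{2^{d+1}}{(d+1)!}.$$
   Context: For integers $i,d\ge -1$ define $f_{-1,-1}=1$, $f_{-1,d}=0$ for $d\ge0$, $f_{i,-1}=0$ for $i\ge0$, and $f_{i,d}=(i+1)!\,S(d+1,i+1)$ for $i,d\ge0$, where $S(\cdot,\cdot)$ is the Stirling number of the second kind. For $d\ge0$ define rational numbers $F_{i,d}$, $-1\le i\le d$, by $F_{d,d}=1$ and recursively for $-1\le i\le d-1$, $F_{i,d}=\frac{1}{(d+1)!-(i+1)!}\sum_{j=i+1}^{d}f_{i,j}F_{j,d}$. Let $F_d(z)=\sum_{i=-1}^dF_{i,d}z^{d-i}$, and define the $H$-polynomial $H_d(z)=F_d(z-1)=\sum_{i=0}^{d+1}H_{i,d}z^{d+1-i}$, which defines the numbers $H_{i,d}$ (in particular $H_{1,d}=F_{0,d}$). *)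

theory Defs
  imports "HOL-Combinatorics.Stirling" "HOL-Computational_Algebra.Polynomial" Complex_Main
begin

definition fnum :: "int \<Rightarrow> int \<Rightarrow> real" where
  "fnum i d =
     (if i = -1 \<and> d = -1 then 1
      else if i = -1 \<or> d = -1 then 0
      else fact (nat (i + 1)) * real (Stirling (nat (d + 1)) (nat (i + 1))))"

function Fnum :: "int \<Rightarrow> int \<Rightarrow> real" where
  "Fnum i d =
     (if i = d then 1
      else if -1 \<le> i \<and> i < d then
        (1 / (fact (nat (d + 1)) - fact (nat (i + 1)))) *
          (\<Sum>j\<in>{i+1..d}. fnum i j * Fnum j d)
      else 0)"
  by auto
termination
  by (relation "measure (\<lambda>(i, d). nat (d - i))") auto

definition Fpoly :: "nat \<Rightarrow> real poly" where
  "Fpoly d = (\<Sum>i\<in>{-1..int d}. monom (Fnum i (int d)) (nat (int d - i)))"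

definition Hpoly :: "nat \<Rightarrow> real poly" where
  "Hpoly d = pcompose (Fpoly d) [:-1, 1:]"

definition Hnum :: "nat \<Rightarrow> nat \<Rightarrow> real" where
  "Hnum i d = coeff (Hpoly d) (d + 1 - i)"

end

theory Submission
  imports Defs
begin

text \<open>
  Summing the recursion for F(0,d) gives (d+1)! H(1,d) = sum_{j<=d} F(j,d), and each F(j,d) lies
  between (j+1)! S(d+1,j+1) / (d+1)!, the contribution of the last summand of its recursion, and the
  binomial coefficient C(d+1,j+1). The upper bound survives the recursion because
  (j+1)! S(d+2,j+2) <= C(d+1,j+1) (d+1)!, and its sum is 2^(d+1). The lower bounds sum to
  a(d+1) / (d+1)!, where a(n) = sum_k k! S(n,k) are the Fubini (ordered Bell) numbers. Keeping only the
  last three terms of their recurrence a(n) = sum_{j<n} C(n,j) a(j), the bound a(n) / n! >= sqrt 2^(n-1)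
  follows by induction since sqrt 2^3 <= sqrt 2^2 + sqrt 2 / 2 + 1/6.
\<close>

lemma Stirling_Suc_Suc_eq_sum_choose:
  "Stirling (Suc n) (Suc k) = (\<Sum>m\<le>n. (n choose m) * Stirling m k)"
proof (induction n arbitrary: k)
  case 0
  then show ?case by (cases k) auto
next
  case (Suc n)
  show ?case
  proof (cases k)
    case 0
    have "Stirling m 0 = (if m = 0 then 1 else 0)" for m
      by (cases m) auto
    then have "(\<Sum>m\<le>Suc n. (Suc n choose m) * Stirling m 0) = (\<Sum>m\<le>Suc n. if m = 0 then 1 else 0)"
      by (intro sum.cong) auto
    then show ?thesis unfolding 0 Stirling_1 by simp
  next
    case (Suc k')
    define \<Sigma> where "\<Sigma> k = (\<Sum>m\<le>n. (n choose m) * Stirling m k)" for k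
    have shift: "(\<Sum>m\<le>n. (n choose Suc m) * Stirling (Suc m) k) = \<Sigma> k"
      using sum.atMost_Suc_shift[of "\<lambda>m. (n choose m) * Stirling m k" n]
      by (simp add: \<Sigma>_def Suc binomial_eq_0 del: Stirling.simps(4))
    have "(\<Sum>m\<le>Suc n. (Suc n choose m) * Stirling m k)
        = (\<Sum>m\<le>n. (n choose m) * Stirling (Suc m) k) + (\<Sum>m\<le>n. (n choose Suc m) * Stirling (Suc m) k)"
      by (subst sum.atMost_Suc_shift) (simp add: Suc sum.distrib algebra_simps del: Stirling.simps(4))
    also have "(\<Sum>m\<le>n. (n choose m) * Stirling (Suc m) k) = k * \<Sigma> k + \<Sigma> k'"
      by (simp add: \<Sigma>_def Suc sum_distrib_left sum.distrib algebra_simps)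
    also note shift
    also have "k * \<Sigma> k + \<Sigma> k' + \<Sigma> k = Stirling (Suc (Suc n)) (Suc k)"
      using Suc.IH[of k] Suc.IH[of k'] by (simp add: \<Sigma>_def Suc)
    finally show ?thesis ..
  qed
qed

lemma Stirling_Suc_Suc_le:
  "k \<le> n \<Longrightarrow> Stirling (Suc n) (Suc k) \<le> (n choose k) * Suc k ^ (n - k)"
proof (induction n arbitrary: k)
  case 0
  then show ?case by simp
next
  case (Suc n)
  show ?case
  proof (cases "k = Suc n")
    case False
    with Suc.prems have kn: "k \<le> n" by simp
    show ?thesis
    proof (cases k)
      case 0
      then show ?thesis by (simp del: Stirling.simps)
    next
      case (Suc k')
      have exps: "n - k' = Suc (n - k)" "Suc n - k = Suc (n - k)"
        using kn Suc by auto
      have "Stirling (Suc (Suc n)) (Suc k) = Suc k * Stirling (Suc n) (Suc k) + Stirling (Suc n) k"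
        using Suc by simp
      also have "\<dots> \<le> Suc k * ((n choose k) * Suc k ^ (n - k)) + (n choose k') * Suc k' ^ (n - k')"
        using Suc.IH[OF kn] Suc.IH[of k'] kn Suc by (intro add_mono mult_le_mono2) auto
      also have "Suc k' ^ (n - k') \<le> Suc k ^ (n - k')"
        using Suc by (intro power_mono) auto
      also have "Suc k * ((n choose k) * Suc k ^ (n - k)) + (n choose k') * Suc k ^ (n - k')
                 = ((n choose k) + (n choose k')) * Suc k ^ (Suc n - k)"
        unfolding exps by (simp only: power_Suc) (simp only: algebra_simps)
      also have "(n choose k) + (n choose k') = (Suc n choose k)"
        using Suc by simp
      finally show ?thesis by simp
    qed
  qed simp
qed

lemma fact_mult_Suc_power_le: "k \<le> n \<Longrightarrow> fact k * Suc k ^ (n - k) \<le> (fact n :: nat)"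
proof (induction n rule: dec_induct)
  case (step n)
  have "fact k * Suc k ^ (Suc n - k) = fact k * Suc k ^ (n - k) * Suc k"
    using step.hyps by (simp add: Suc_diff_le algebra_simps)
  also have "\<dots> \<le> fact n * Suc n"
    using step.IH step.hyps by (intro mult_le_mono) auto
  finally show ?case by (simp add: algebra_simps)
qed simp

lemma fact_mult_Stirling_Suc_Suc_le:
  assumes "k \<le> n"
  shows "fact k * Stirling (Suc n) (Suc k) \<le> (n choose k) * (fact n :: nat)"
proof -
  have "fact k * Stirling (Suc n) (Suc k) \<le> (n choose k) * (fact k * Suc k ^ (n - k))"
    using Stirling_Suc_Suc_le[OF assms] by simp
  also have "\<dots> \<le> (n choose k) * fact n"
    using fact_mult_Suc_power_le[OF assms] by simp
  finally show ?thesis .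
qed

lemma Stirling_Suc_Suc_eq_choose_plus_sum:
  assumes "i < d"
  shows "Stirling (Suc (Suc d)) (Suc (Suc i))
    = (Suc d choose Suc i) + (\<Sum>j\<in>{Suc i..d}. Stirling (Suc j) (Suc i) * (Suc d choose Suc j))"
proof -
  have "Stirling (Suc (Suc d)) (Suc (Suc i)) = (\<Sum>j\<le>d. Stirling (Suc j) (Suc i) * (Suc d choose Suc j))"
    by (simp add: Stirling_Suc_Suc_eq_sum_choose[of "Suc d"] sum.atMost_Suc_shift mult.commute
        del: sum.atMost_Suc Stirling.simps(4) binomial_Suc_Suc)
  also have "\<dots> = (\<Sum>j\<in>{i..d}. Stirling (Suc j) (Suc i) * (Suc d choose Suc j))"
    by (rule sum.mono_neutral_right) auto
  also have "\<dots> = (Suc d choose Suc i) + (\<Sum>j\<in>{Suc i..d}. Stirling (Suc j) (Suc i) * (Suc d choose Suc j))"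
    using assms by (subst sum.atLeast_Suc_atMost) auto
  finally show ?thesis .
qed

lemma Suc_mult_Stirling_eq_sum_choose:
  "Suc k * Stirling n (Suc k) = (\<Sum>j<n. (n choose j) * Stirling j k)"
proof -
  have "Suc k * Stirling n (Suc k) + Stirling n k = (\<Sum>j\<le>n. (n choose j) * Stirling j k)"
    using Stirling_Suc_Suc_eq_sum_choose[of n k] by simp
  also have "\<dots> = (\<Sum>j<n. (n choose j) * Stirling j k) + Stirling n k"
    by (simp add: lessThan_Suc_atMost[symmetric])
  finally show ?thesis by simp
qed

definition fubini :: "nat \<Rightarrow> nat" where
  "fubini n = (\<Sum>k\<le>n. fact k * Stirling n k)"

lemma fubini_eq_sum_atMost: "n \<le> M \<Longrightarrow> fubini n = (\<Sum>k\<le>M. fact k * Stirling n k)"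
  unfolding fubini_def by (rule sum.mono_neutral_left) auto

lemma fubini_Suc: "fubini (Suc n) = (\<Sum>j\<le>n. (Suc n choose j) * fubini j)"
proof -
  have "fubini (Suc n) = (\<Sum>k\<le>n. fact k * (Suc k * Stirling (Suc n) (Suc k)))"
    unfolding fubini_def by (subst sum.atMost_Suc_shift) (simp add: algebra_simps del: Stirling.simps(4))
  also have "\<dots> = (\<Sum>k\<le>n. \<Sum>j\<le>n. (Suc n choose j) * (fact k * Stirling j k))"
    by (intro sum.cong refl)
      (simp only: Suc_mult_Stirling_eq_sum_choose lessThan_Suc_atMost sum_distrib_left mult.left_commute)
  also have "\<dots> = (\<Sum>j\<le>n. (Suc n choose j) * fubini j)"
    by (subst sum.swap) (simp add: fubini_eq_sum_atMost sum_distrib_left)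
  finally show ?thesis .
qed

lemma fubini_div_fact_Suc:
  "real (fubini (Suc n)) / fact (Suc n) = (\<Sum>j\<le>n. real (fubini j) / fact j / fact (Suc n - j))"
proof -
  have "real (fubini (Suc n)) = (\<Sum>j\<le>n. fact (Suc n) / (fact j * fact (Suc n - j)) * real (fubini j))"
    by (simp add: fubini_Suc binomial_fact)
  then show ?thesis
    by (simp add: sum_divide_distrib)
qed

lemma sqrt2_power_Suc3_le: "sqrt 2 ^ (m + 3) \<le> sqrt 2 ^ (m + 2) + sqrt 2 ^ (m + 1) / 2 + sqrt 2 ^ m / 6"
proof -
  define s where "s = sqrt (2::real)"
  have s2: "s * s = 2" and s_nonneg: "s \<ge> 0"
    by (simp_all add: s_def)
  have "s \<le> 13/9"
    unfolding s_def by (rule real_le_lsqrt) (auto simp: power2_eq_square)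
  then have "0 \<le> s ^ m * (2 + s/2 + 1/6 - 2 * s)"
    using s_nonneg by (intro mult_nonneg_nonneg) auto
  moreover have "s ^ (m + 3) = s ^ m * 2 * s" and "s ^ (m + 2) = s ^ m * 2"
    using s2 by (simp_all add: power_add eval_nat_numeral algebra_simps)
  then have "s ^ (m + 2) + s ^ (m + 1) / 2 + s ^ m / 6 - s ^ (m + 3) = s ^ m * (2 + s/2 + 1/6 - 2 * s)"
    by (simp add: algebra_simps)
  ultimately show ?thesis
    unfolding s_def by linarith
qed

lemma sqrt2_power_le_fubini_div_fact:
  "n \<ge> 1 \<Longrightarrow> sqrt 2 ^ (n - 1) \<le> real (fubini n) / fact n"
proof (induction n rule: less_induct)
  case (less n)
  define g where "g n = real (fubini n) / fact n" for n
  have "n = 1 \<or> n = 2 \<or> n = 3 \<or> (\<exists>m. n = m + 4)"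
    using less.prems by presburger
  then consider "n = 1" | "n = 2" | "n = 3" | m where "n = m + 4"
    by blast
  then show ?case
  proof cases
    case 1
    then show ?thesis by (simp add: fubini_def)
  next
    case 2
    have "sqrt 2 \<le> (3/2::real)"
      by (rule real_le_lsqrt) (auto simp: power2_eq_square)
    then show ?thesis using 2 by (simp add: fubini_def eval_nat_numeral)
  next
    case 3
    then show ?thesis by (simp add: fubini_def eval_nat_numeral fact_numeral)
  next
    case 4
    have IH: "sqrt 2 ^ j \<le> g (Suc j)" if "j \<in> {m, m+1, m+2}" for j
      using less.IH[of "Suc j"] that 4 by (auto simp: g_def)
    have "g n = (\<Sum>j\<le>m+3. g j / fact (n - j))"
      using fubini_div_fact_Suc[of "m+3"] unfolding g_def 4 by (simp add: ac_simps)
    also have "\<dots> \<ge> (\<Sum>j\<in>{m+1, m+2, m+3}. g j / fact (n - j))"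
      by (rule sum_mono2) (auto simp: g_def)
    finally have "g (m+3) + g (m+2) / 2 + g (m+1) / 6 \<le> g n"
      using 4 by (simp add: fact_numeral eval_nat_numeral)
    moreover have "sqrt 2 ^ (m+2) + sqrt 2 ^ (m+1) / 2 + sqrt 2 ^ m / 6 \<le> g (m+3) + g (m+2) / 2 + g (m+1) / 6"
      using IH[of m] IH[of "m+1"] IH[of "m+2"] by (simp add: eval_nat_numeral)
    moreover have "sqrt 2 ^ (n - 1) = sqrt 2 ^ (m + 3)"
      using 4 by simp
    ultimately show ?thesis
      using sqrt2_power_Suc3_le[of m] unfolding g_def by linarith
  qed
qed

declare Fnum.simps[simp del] Stirling.simps(4)[simp del]

lemma Fnum_diag: "Fnum i i = 1"
  by (subst Fnum.simps) simp

lemma Fnum_rec: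
  assumes "i < d"
  shows "Fnum (int i) (int d) =
    (\<Sum>j\<in>{Suc i..d}. fact (Suc i) * real (Stirling (Suc j) (Suc i)) * Fnum (int j) (int d))
      / (fact (Suc d) - fact (Suc i))"
proof -
  have "Fnum (int i) (int d) = (1 / (fact (Suc d) - fact (Suc i))) *
          (\<Sum>j\<in>{int i+1..int d}. fnum (int i) j * Fnum j (int d))"
    using assms by (subst Fnum.simps) (simp add: nat_add_distrib)
  also have "{int i+1..int d} = int ` {Suc i..d}"
    by (simp add: image_int_atLeastAtMost)
  also have "(\<Sum>j\<in>int ` {Suc i..d}. fnum (int i) j * Fnum j (int d))
      = (\<Sum>j\<in>{Suc i..d}. fact (Suc i) * real (Stirling (Suc j) (Suc i)) * Fnum (int j) (int d))"
    by (subst sum.reindex) (auto simp: fnum_def nat_add_distrib intro!: sum.cong)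
  finally show ?thesis by simp
qed

lemma Fnum_minus_one: "Fnum (-1) (int d) = 0"
proof -
  have "fnum (-1) j = 0" if "j \<ge> 0" for j
    using that by (simp add: fnum_def)
  then show ?thesis
    by (subst Fnum.simps) simp
qed

lemma Fnum_nonneg: "i \<le> d \<Longrightarrow> Fnum (int i) (int d) \<ge> 0"
proof (induction "d - i" arbitrary: i rule: less_induct)
  case less
  show ?case
  proof (cases "i = d")
    case False
    with less.prems have "i < d" by simp
    moreover from this have "fact (Suc i) < (fact (Suc d) :: real)"
      by (intro fact_less_mono) auto
    moreover have "(\<Sum>j\<in>{Suc i..d}. fact (Suc i) * real (Stirling (Suc j) (Suc i)) * Fnum (int j) (int d)) \<ge> 0"
      by (intro sum_nonneg mult_nonneg_nonneg) (use less.hyps in auto)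
    ultimately show ?thesis
      by (simp add: Fnum_rec)
  qed (simp add: Fnum_diag)
qed

lemma Fnum_le_binomial: "i \<le> d \<Longrightarrow> Fnum (int i) (int d) \<le> real (Suc d choose Suc i)"
proof (induction "d - i" arbitrary: i rule: less_induct)
  case less
  show ?case
  proof (cases "i = d")
    case False
    with less.prems have "i < d" by simp
    define c :: real where "c = fact (Suc i)"
    define S where "S j = real (Stirling (Suc j) (Suc i))" for j
    define C where "C j = real (Suc d choose Suc j)" for j
    have den: "c < fact (Suc d)"
      unfolding c_def by (rule fact_less_mono) (use \<open>i < d\<close> in auto)
    have "fact (Suc i) * ((Suc d choose Suc i) + (\<Sum>j\<in>{Suc i..d}. Stirling (Suc j) (Suc i) * (Suc d choose Suc j)))
        \<le> (Suc d choose Suc i) * (fact (Suc d) :: nat)"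
      using fact_mult_Stirling_Suc_Suc_le[of "Suc i" "Suc d"] \<open>i < d\<close>
      by (simp only: Stirling_Suc_Suc_eq_choose_plus_sum)
    then have "real (fact (Suc i) * ((Suc d choose Suc i) + (\<Sum>j\<in>{Suc i..d}. Stirling (Suc j) (Suc i) * (Suc d choose Suc j))))
        \<le> real ((Suc d choose Suc i) * fact (Suc d))"
      by (simp only: of_nat_le_iff)
    then have "c * (C i + (\<Sum>j\<in>{Suc i..d}. S j * C j)) \<le> C i * fact (Suc d)"
      unfolding c_def S_def C_def by (simp only: of_nat_mult of_nat_add of_nat_sum of_nat_fact)
    moreover have "(\<Sum>j\<in>{Suc i..d}. c * S j * Fnum (int j) (int d)) \<le> (\<Sum>j\<in>{Suc i..d}. c * S j * C j)"
      by (intro sum_mono mult_left_mono) (use less.hyps in \<open>auto simp: c_def S_def C_def\<close>)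
    moreover have "(\<Sum>j\<in>{Suc i..d}. c * S j * C j) = c * (\<Sum>j\<in>{Suc i..d}. S j * C j)"
      by (simp add: sum_distrib_left mult.assoc)
    ultimately have "(\<Sum>j\<in>{Suc i..d}. c * S j * Fnum (int j) (int d)) \<le> (fact (Suc d) - c) * C i"
      by (simp add: algebra_simps)
    with den show ?thesis
      unfolding Fnum_rec[OF \<open>i < d\<close>] c_def[symmetric] S_def[symmetric] C_def[symmetric]
      by (simp add: pos_divide_le_eq mult.commute)
  qed (simp add: Fnum_diag)
qed

lemma Fnum_ge_Stirling:
  assumes "i \<le> d"
  shows "fact (Suc i) * real (Stirling (Suc d) (Suc i)) / fact (Suc d) \<le> Fnum (int i) (int d)"
proof (cases "i = d")
  case False
  with assms have "i < d" by simp
  define c :: real where "c = fact (Suc i)"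
  define \<Sigma> where "\<Sigma> = (\<Sum>j\<in>{Suc i..d}. c * real (Stirling (Suc j) (Suc i)) * Fnum (int j) (int d))"
  have den: "c < fact (Suc d)"
    unfolding c_def by (rule fact_less_mono) (use \<open>i < d\<close> in auto)
  have c_pos: "c > 0"
    by (simp add: c_def)
  have "c * real (Stirling (Suc d) (Suc i)) = c * real (Stirling (Suc d) (Suc i)) * Fnum (int d) (int d)"
    by (simp add: Fnum_diag)
  also have "\<dots> \<le> \<Sigma>"
    unfolding \<Sigma>_def using \<open>i < d\<close> c_pos
    by (intro member_le_sum) (auto intro!: mult_nonneg_nonneg Fnum_nonneg)
  finally have diag_term_le: "c * real (Stirling (Suc d) (Suc i)) \<le> \<Sigma>" .
  then have "c * real (Stirling (Suc d) (Suc i)) / fact (Suc d) \<le> \<Sigma> / fact (Suc d)"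
    by (intro divide_right_mono) auto
  also have "\<dots> \<le> \<Sigma> / (fact (Suc d) - c)"
    using den c_pos diag_term_le by (intro divide_left_mono) (auto intro: order_trans[rotated])
  also have "\<dots> = Fnum (int i) (int d)"
    unfolding Fnum_rec[OF \<open>i < d\<close>] \<Sigma>_def c_def ..
  finally show ?thesis
    unfolding c_def .
qed (simp add: Fnum_diag)

lemma fact_mult_Fnum_zero_eq_sum:
  assumes "d \<ge> 1"
  shows "fact (Suc d) * Fnum 0 (int d) = (\<Sum>j\<le>d. Fnum (int j) (int d))"
proof -
  have "fact (Suc 0) < (fact (Suc d) :: real)"
    using assms by (intro fact_less_mono) auto
  then have "(fact (Suc d) - 1) * Fnum 0 (int d) = (\<Sum>j\<in>{Suc 0..d}. Fnum (int j) (int d))"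
    using Fnum_rec[of 0 d] assms by simp
  moreover have "(\<Sum>j\<le>d. Fnum (int j) (int d)) = Fnum 0 (int d) + (\<Sum>j\<in>{Suc 0..d}. Fnum (int j) (int d))"
    by (simp add: atMost_atLeast0 sum.atLeast_Suc_atMost)
  ultimately show ?thesis
    by (simp add: algebra_simps)
qed

lemma pcompose_monom: "pcompose (monom c n) q = smult c (q ^ n)"
  by (induction n) (simp_all add: monom_Suc pcompose_pCons monom_0 pcompose_const algebra_simps)

lemma Hnum_1_eq_Fnum_zero: "Hnum 1 d = Fnum 0 (int d)"
proof -
  define q :: "real poly" where "q = [:-1, 1:]"
  have coeff_q_power: "coeff (q ^ nat (int d - i)) d = (if i = 0 then 1 else 0)"
    if "0 \<le> i" "i \<le> int d" for i
  proof (cases "i = 0")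
    case False
    with that have "degree (q ^ nat (int d - i)) < d"
      by (simp add: q_def degree_linear_power)
    then show ?thesis
      using False coeff_eq_0 by auto
  qed (simp add: q_def coeff_linear_power)
  have "Hnum 1 d = coeff (\<Sum>i\<in>{-1..int d}. smult (Fnum i (int d)) (q ^ nat (int d - i))) d"
    by (simp add: Hnum_def Hpoly_def Fpoly_def pcompose_sum pcompose_monom q_def)
  also have "\<dots> = (\<Sum>i\<in>{-1..int d}. Fnum i (int d) * coeff (q ^ nat (int d - i)) d)"
    by (simp add: coeff_sum)
  also have "\<dots> = (\<Sum>i\<in>{-1..int d}. if i = 0 then Fnum 0 (int d) else 0)"
  proof (intro sum.cong refl)
    fix i
    assume "i \<in> {-1..int d}"
    then consider "i = -1" | "0 \<le> i" "i \<le> int d"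
      by fastforce
    then show "Fnum i (int d) * coeff (q ^ nat (int d - i)) d = (if i = 0 then Fnum 0 (int d) else 0)"
      by cases (simp_all add: Fnum_minus_one coeff_q_power)
  qed
  also have "\<dots> = Fnum 0 (int d)"
    by simp
  finally show ?thesis .
qed

lemma sum_Fnum_le: "(\<Sum>j\<le>d. Fnum (int j) (int d)) \<le> 2 ^ Suc d"
proof -
  have "(\<Sum>j\<le>d. Fnum (int j) (int d)) \<le> (\<Sum>j\<le>d. real (Suc d choose Suc j))"
    by (intro sum_mono Fnum_le_binomial) auto
  also have "\<dots> \<le> (\<Sum>k\<le>Suc d. real (Suc d choose k))"
    by (subst sum.atMost_Suc_shift) simp
  also have "\<dots> = 2 ^ Suc d"
    using choose_row_sum[of "Suc d"] by (simp flip: of_nat_sum)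
  finally show ?thesis .
qed

lemma sqrt2_power_le_sum_Fnum: "sqrt 2 ^ d \<le> (\<Sum>j\<le>d. Fnum (int j) (int d))"
proof -
  have "sqrt 2 ^ d \<le> real (fubini (Suc d)) / fact (Suc d)"
    using sqrt2_power_le_fubini_div_fact[of "Suc d"] by simp
  also have "real (fubini (Suc d)) = (\<Sum>j\<le>d. fact (Suc j) * real (Stirling (Suc d) (Suc j)))"
    unfolding fubini_def by (subst sum.atMost_Suc_shift) (simp add: of_nat_sum algebra_simps)
  also have "\<dots> / fact (Suc d) = (\<Sum>j\<le>d. fact (Suc j) * real (Stirling (Suc d) (Suc j)) / fact (Suc d))"
    by (simp add: sum_divide_distrib)
  also have "\<dots> \<le> (\<Sum>j\<le>d. Fnum (int j) (int d))"
    by (intro sum_mono Fnum_ge_Stirling) auto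
  finally show ?thesis .
qed

theorem proposition2p13:
  fixes d :: nat
  assumes "d \<ge> 1"
  shows "sqrt 2 ^ d / (fact (d + 1) * real d) \<le> Hnum 1 d
         \<and> Hnum 1 d \<le> 2 ^ (d + 1) / fact (d + 1)"
proof -
  have H: "Hnum 1 d = (\<Sum>j\<le>d. Fnum (int j) (int d)) / fact (d + 1)"
    unfolding Hnum_1_eq_Fnum_zero fact_mult_Fnum_zero_eq_sum[OF assms, symmetric] by simp
  have "sqrt 2 ^ d / (fact (d + 1) * real d) \<le> sqrt 2 ^ d / fact (d + 1)"
    using assms by (intro divide_left_mono) auto
  also have "\<dots> \<le> Hnum 1 d"
    unfolding H using sqrt2_power_le_sum_Fnum[of d] by (intro divide_right_mono) auto
  finally show ?thesis
    unfolding H using sum_Fnum_le[of d] by (auto intro: divide_right_mono)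
qed

end
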